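(* Let $G$ be a compact Hausdorff topological group and $p\colon E\to B$ a $G$-map of Hausdorff $G$-spaces. If $B$ is $G$-connected and $E^G\neq\emptyset$, then $\mathrm{secat}_G(p)\le\mathrm{cat}_G(B)$.
   Context: $X^H=\{x: hx=x\ \forall h\in H\}$; $X$ is $G$-connected if $X^H$ is path-connected for every closed subgroup $H\le G$. A $G$-homotopy is an equivariant homotopy with $G$ acting trivially on $I$. An invariant set $U\subseteq B$ is $G$-categorical if its inclusion is $G$-homotopic to a map with values in a single orbit; $\mathrm{cat}_G(B)$ is the least $k$ such that $B$ is covered by $k$ open $G$-categorical sets. $\mathrm{secat}_G(p)$ is the least $k$ such that $B$ is covered by $k$ invariant open sets $U_i$ each admitting a $G$-map $s\colon U_i\to E$ with $ps$ $G$-homotopic to the inclusion $U_i\hookrightarrow B$ ($\infty$ if none). *)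

theory Defs
  imports "HOL-Analysis.Analysis"
begin

definition topological_group ::
  "'g topology \<Rightarrow> ('g \<Rightarrow> 'g \<Rightarrow> 'g) \<Rightarrow> ('g \<Rightarrow> 'g) \<Rightarrow> 'g \<Rightarrow> bool" where
  "topological_group TG mul ginv e \<longleftrightarrow>
     e \<in> topspace TG \<and>
     (\<forall>x\<in>topspace TG. \<forall>y\<in>topspace TG. mul x y \<in> topspace TG) \<and>
     (\<forall>x\<in>topspace TG. ginv x \<in> topspace TG) \<and>
     (\<forall>x\<in>topspace TG. \<forall>y\<in>topspace TG. \<forall>z\<in>topspace TG. mul (mul x y) z = mul x (mul y z)) \<and>
     (\<forall>x\<in>topspace TG. mul e x = x \<and> mul x e = x) \<and>
     (\<forall>x\<in>topspace TG. mul (ginv x) x = e \<and> mul x (ginv x) = e) \<and>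
     continuous_map (prod_topology TG TG) TG (\<lambda>(x, y). mul x y) \<and>
     continuous_map TG TG ginv"

definition G_space ::
  "'g topology \<Rightarrow> ('g \<Rightarrow> 'g \<Rightarrow> 'g) \<Rightarrow> 'g \<Rightarrow> 'a topology \<Rightarrow> ('g \<Rightarrow> 'a \<Rightarrow> 'a) \<Rightarrow> bool" where
  "G_space TG mul e X act \<longleftrightarrow>
     continuous_map (prod_topology TG X) X (\<lambda>(g, x). act g x) \<and>
     (\<forall>x\<in>topspace X. act e x = x) \<and>
     (\<forall>g\<in>topspace TG. \<forall>h\<in>topspace TG. \<forall>x\<in>topspace X. act (mul g h) x = act g (act h x))"

definition equivariant ::
  "'g set \<Rightarrow> 'a topology \<Rightarrow> ('g \<Rightarrow> 'a \<Rightarrow> 'a) \<Rightarrow> ('g \<Rightarrow> 'b \<Rightarrow> 'b) \<Rightarrow> ('a \<Rightarrow> 'b) \<Rightarrow> bool" where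
  "equivariant G X actX actY f \<longleftrightarrow>
     (\<forall>g\<in>G. \<forall>x\<in>topspace X. f (actX g x) = actY g (f x))"

definition G_map ::
  "'g set \<Rightarrow> 'a topology \<Rightarrow> ('g \<Rightarrow> 'a \<Rightarrow> 'a) \<Rightarrow> 'b topology \<Rightarrow> ('g \<Rightarrow> 'b \<Rightarrow> 'b) \<Rightarrow> ('a \<Rightarrow> 'b) \<Rightarrow> bool" where
  "G_map G X actX Y actY f \<longleftrightarrow> continuous_map X Y f \<and> equivariant G X actX actY f"

text \<open>G-homotopy: homotopy through equivariant maps (G acts trivially on I).\<close>
definition G_homotopic ::
  "'g set \<Rightarrow> 'a topology \<Rightarrow> ('g \<Rightarrow> 'a \<Rightarrow> 'a) \<Rightarrow> 'b topology \<Rightarrow> ('g \<Rightarrow> 'b \<Rightarrow> 'b)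
     \<Rightarrow> ('a \<Rightarrow> 'b) \<Rightarrow> ('a \<Rightarrow> 'b) \<Rightarrow> bool" where
  "G_homotopic G X actX Y actY f f' \<longleftrightarrow>
     homotopic_with (equivariant G X actX actY) X Y f f'"

definition closed_subgroup ::
  "'g topology \<Rightarrow> ('g \<Rightarrow> 'g \<Rightarrow> 'g) \<Rightarrow> ('g \<Rightarrow> 'g) \<Rightarrow> 'g \<Rightarrow> 'g set \<Rightarrow> bool" where
  "closed_subgroup TG mul ginv e H \<longleftrightarrow>
     H \<subseteq> topspace TG \<and> closedin TG H \<and> e \<in> H \<and>
     (\<forall>x\<in>H. \<forall>y\<in>H. mul x y \<in> H) \<and> (\<forall>x\<in>H. ginv x \<in> H)"

definition fixed_set :: "'a topology \<Rightarrow> ('g \<Rightarrow> 'a \<Rightarrow> 'a) \<Rightarrow> 'g set \<Rightarrow> 'a set" where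
  "fixed_set X act H = {x \<in> topspace X. \<forall>h\<in>H. act h x = x}"

definition G_connected ::
  "'g topology \<Rightarrow> ('g \<Rightarrow> 'g \<Rightarrow> 'g) \<Rightarrow> ('g \<Rightarrow> 'g) \<Rightarrow> 'g \<Rightarrow> 'a topology \<Rightarrow> ('g \<Rightarrow> 'a \<Rightarrow> 'a) \<Rightarrow> bool" where
  "G_connected TG mul ginv e X act \<longleftrightarrow>
     (\<forall>H. closed_subgroup TG mul ginv e H \<longrightarrow> path_connectedin X (fixed_set X act H))"

definition G_orbit :: "'g set \<Rightarrow> ('g \<Rightarrow> 'a \<Rightarrow> 'a) \<Rightarrow> 'a \<Rightarrow> 'a set" where
  "G_orbit G act b = {act g b | g. g \<in> G}"

definition G_invariant :: "'g set \<Rightarrow> ('g \<Rightarrow> 'a \<Rightarrow> 'a) \<Rightarrow> 'a set \<Rightarrow> bool" where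
  "G_invariant G act U \<longleftrightarrow> (\<forall>g\<in>G. \<forall>x\<in>U. act g x \<in> U)"

definition G_categorical :: "'g set \<Rightarrow> 'a topology \<Rightarrow> ('g \<Rightarrow> 'a \<Rightarrow> 'a) \<Rightarrow> 'a set \<Rightarrow> bool" where
  "G_categorical G B act U \<longleftrightarrow>
     U \<subseteq> topspace B \<and> G_invariant G act U \<and>
     (\<exists>f b. b \<in> topspace B \<and> f ` U \<subseteq> G_orbit G act b \<and>
        G_homotopic G (subtopology B U) act B act id f)"

text \<open>Least k such that B is covered by k open G-categorical sets (\<infinity> if none).\<close>
definition cat_G :: "'g set \<Rightarrow> 'a topology \<Rightarrow> ('g \<Rightarrow> 'a \<Rightarrow> 'a) \<Rightarrow> enat" where
  "cat_G G B act = Inf {enat k | k. \<exists>U :: nat \<Rightarrow> 'a set.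
      (\<forall>i<k. openin B (U i) \<and> G_categorical G B act (U i)) \<and>
      (\<Union>i<k. U i) = topspace B}"

text \<open>Equivariant sectional category of p : E \<rightarrow> B (\<infinity> if no such cover exists).\<close>
definition secat_G ::
  "'g set \<Rightarrow> 'e topology \<Rightarrow> ('g \<Rightarrow> 'e \<Rightarrow> 'e) \<Rightarrow> 'b topology \<Rightarrow> ('g \<Rightarrow> 'b \<Rightarrow> 'b) \<Rightarrow> ('e \<Rightarrow> 'b) \<Rightarrow> enat" where
  "secat_G G E actE B actB p = Inf {enat k | k. \<exists>U :: nat \<Rightarrow> 'b set.
      (\<forall>i<k. U i \<subseteq> topspace B \<and> openin B (U i) \<and> G_invariant G actB (U i) \<and>
         (\<exists>s. G_map G (subtopology B (U i)) actB E actE s \<and>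
              G_homotopic G (subtopology B (U i)) actB B actB (p \<circ> s) id)) \<and>
      (\<Union>i<k. U i) = topspace B}"

end

theory Submission
  imports Defs
begin

text \<open>Since E^G is nonempty, B has a fixed point c = p e0, and it suffices to show that every
G-categorical open set U is G-homotopic to the constant map at c: then the constant map at e0
is a G-section over U up to G-homotopy. The inclusion of U is G-homotopic to a map into an
orbit G b, so it is enough to deform that orbit. The stabiliser G_b is a closed subgroup, so
B^(G_b) is path-connected and contains both b and c; a path \<gamma> from b to c in it yields the
equivariant homotopy (g b, t) \<mapsto> g \<gamma>(t). This is well defined because \<gamma> is fixed by G_b, and
continuous because (g, t) \<mapsto> (g b, t) is a continuous surjection from the compact space G \<times> I
onto the Hausdorff space G b \<times> I, hence a quotient map.\<close>

definition stabilizer :: "'g set \<Rightarrow> ('g \<Rightarrow> 'a \<Rightarrow> 'a) \<Rightarrow> 'a \<Rightarrow> 'g set" where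
  "stabilizer G act x = {g \<in> G. act g x = x}"

lemma equivariant_cong:
  assumes "G_invariant G actX (topspace X)" and "\<And>x. x \<in> topspace X \<Longrightarrow> f x = f' x"
  shows "equivariant G X actX actY f \<longleftrightarrow> equivariant G X actX actY f'"
  using assms by (simp add: equivariant_def G_invariant_def)

lemma equivariant_compose:
  assumes "equivariant G X actX actY f" and "f \<in> topspace X \<rightarrow> topspace Y"
    and "equivariant G Y actY actZ j"
  shows "equivariant G X actX actZ (j \<circ> f)"
  using assms by (auto simp: equivariant_def Pi_iff)

locale G_action =
  fixes TG :: "'g topology" and mul :: "'g \<Rightarrow> 'g \<Rightarrow> 'g" and ginv :: "'g \<Rightarrow> 'g" and e :: 'g
    and X :: "'a topology" and act :: "'g \<Rightarrow> 'a \<Rightarrow> 'a"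
  assumes topological_group: "topological_group TG mul ginv e"
    and G_space: "G_space TG mul e X act"
begin

lemma
  shows unit_in_group: "e \<in> topspace TG"
    and mul_in_group: "\<lbrakk>g \<in> topspace TG; h \<in> topspace TG\<rbrakk> \<Longrightarrow> mul g h \<in> topspace TG"
    and inv_in_group: "g \<in> topspace TG \<Longrightarrow> ginv g \<in> topspace TG"
    and mul_assoc: "\<lbrakk>g \<in> topspace TG; h \<in> topspace TG; k \<in> topspace TG\<rbrakk>
                      \<Longrightarrow> mul (mul g h) k = mul g (mul h k)"
    and mul_unit_left: "g \<in> topspace TG \<Longrightarrow> mul e g = g"
    and mul_inv_left: "g \<in> topspace TG \<Longrightarrow> mul (ginv g) g = e"
    and mul_inv_right: "g \<in> topspace TG \<Longrightarrow> mul g (ginv g) = e"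
  using topological_group by (auto simp: topological_group_def)

lemma
  shows act_unit: "x \<in> topspace X \<Longrightarrow> act e x = x"
    and act_mul: "\<lbrakk>g \<in> topspace TG; h \<in> topspace TG; x \<in> topspace X\<rbrakk>
                    \<Longrightarrow> act (mul g h) x = act g (act h x)"
  using G_space by (auto simp: G_space_def)

lemma continuous_map_act:
  assumes "continuous_map Z TG u" and "continuous_map Z X w"
  shows "continuous_map Z X (\<lambda>z. act (u z) (w z))"
proof -
  have "continuous_map (prod_topology TG X) X (\<lambda>(g, x). act g x)"
    using G_space by (simp add: G_space_def)
  from continuous_map_compose[OF continuous_map_pairedI[OF assms] this]
  show ?thesis by (simp add: o_def)
qed

lemma act_in_topspace: "\<lbrakk>g \<in> topspace TG; x \<in> topspace X\<rbrakk> \<Longrightarrow> act g x \<in> topspace X"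
  using continuous_map_act[OF continuous_map_id, of "\<lambda>_. x"] by (auto simp: continuous_map_def)

lemma inv_act_act: "\<lbrakk>g \<in> topspace TG; x \<in> topspace X\<rbrakk> \<Longrightarrow> act (ginv g) (act g x) = x"
  by (metis act_mul act_unit inv_in_group mul_inv_left)

lemma closed_subgroup_stabilizer:
  assumes "Hausdorff_space X" and x: "x \<in> topspace X"
  shows "closed_subgroup TG mul ginv e (stabilizer (topspace TG) act x)"
  unfolding closed_subgroup_def
proof (intro conjI ballI)
  have "continuous_map TG X (\<lambda>g. act g x)"
    using continuous_map_act[OF continuous_map_id, of "\<lambda>_. x"] x by simp
  from closedin_continuous_map_preimage[OF this closedin_Hausdorff_singleton[OF assms]]
  show "closedin TG (stabilizer (topspace TG) act x)"
    by (simp add: stabilizer_def)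
  fix g assume g: "g \<in> stabilizer (topspace TG) act x"
  then show "ginv g \<in> stabilizer (topspace TG) act x"
    by (metis (mono_tags, lifting) inv_act_act inv_in_group mem_Collect_eq stabilizer_def x)
  fix h assume "h \<in> stabilizer (topspace TG) act x"
  with g show "mul g h \<in> stabilizer (topspace TG) act x"
    by (simp add: stabilizer_def act_mul mul_in_group x)
qed (use x in \<open>auto simp: stabilizer_def unit_in_group act_unit\<close>)

lemma act_eq_on_stabilizer_fixed:
  assumes g: "g \<in> topspace TG" and g': "g' \<in> topspace TG" and "act g b = act g' b"
    and b: "b \<in> topspace X" and y: "y \<in> fixed_set X act (stabilizer (topspace TG) act b)"
  shows "act g y = act g' y"
proof -
  define h where "h = mul (ginv g') g"
  have h: "h \<in> topspace TG" using g g' by (simp add: h_def inv_in_group mul_in_group)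
  have "act h b = b"
    using assms by (metis act_mul h_def inv_act_act inv_in_group)
  then have "act h y = y" using h y by (auto simp: fixed_set_def stabilizer_def)
  moreover have "g = mul g' h"
    using g g' by (metis h_def inv_in_group mul_assoc mul_inv_right mul_unit_left)
  ultimately show ?thesis
    using g' h y by (simp add: act_mul fixed_set_def)
qed

lemma G_invariant_orbit:
  assumes "b \<in> topspace X"
  shows "G_invariant (topspace TG) act (G_orbit (topspace TG) act b)"
  unfolding G_invariant_def G_orbit_def
  using assms by (auto intro: act_mul[symmetric] mul_in_group)

lemma continuous_map_on_orbit_product:
  fixes T :: "'t topology"
  assumes "compact_space TG" and "compact_space T" and "Hausdorff_space T" and "Hausdorff_space X"
    and b: "b \<in> topspace X" and \<phi>: "continuous_map T X \<phi>"
    and H: "\<And>t g. \<lbrakk>t \<in> topspace T; g \<in> topspace TG\<rbrakk> \<Longrightarrow> H (t, act g b) = act g (\<phi> t)"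
  shows "continuous_map (prod_topology T (subtopology X (G_orbit (topspace TG) act b))) X H"
proof -
  define Y where "Y = prod_topology T (subtopology X (G_orbit (topspace TG) act b))"
  define q where "q z = (fst z, act (snd z) b)" for z :: "'t \<times> 'g"
  have q_cont: "continuous_map (prod_topology T TG) Y q"
    unfolding q_def Y_def
  proof (intro continuous_map_pairedI continuous_map_fst)
    show "continuous_map (prod_topology T TG) (subtopology X (G_orbit (topspace TG) act b))
            (\<lambda>z. act (snd z) b)"
      using continuous_map_act[OF continuous_map_snd, of T "\<lambda>_. b"] b
      by (auto simp: continuous_map_in_subtopology G_orbit_def)
  qed
  have "q ` topspace (prod_topology T TG) = topspace Y"
    using b act_in_topspace by (force simp: q_def Y_def G_orbit_def)
  moreover have "closed_map (prod_topology T TG) Y q"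
    using assms(1-4) q_cont
    by (intro T1_Spaces.continuous_imp_closed_map)
       (auto simp: Y_def compact_space_prod_topology Hausdorff_space_prod_topology
                   Hausdorff_space_subtopology)
  ultimately have "quotient_map (prod_topology T TG) Y q"
    using q_cont continuous_closed_imp_quotient_map by blast
  moreover have "continuous_map (prod_topology T TG) X (H \<circ> q)"
  proof (rule continuous_map_eq)
    show "continuous_map (prod_topology T TG) X (\<lambda>z. act (snd z) (\<phi> (fst z)))"
      using continuous_map_act[OF continuous_map_snd continuous_map_compose[OF continuous_map_fst \<phi>]]
      by (simp add: o_def)
  qed (auto simp: q_def H)
  ultimately show ?thesis
    unfolding Y_def by (rule continuous_compose_quotient_map)
qed

lemma orbit_G_homotopic_fixed_point:
  assumes "compact_space TG" and "Hausdorff_space X" and b: "b \<in> topspace X"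
    and \<gamma>: "pathin (subtopology X (fixed_set X act (stabilizer (topspace TG) act b))) \<gamma>"
    and \<gamma>0: "\<gamma> 0 = b" and \<gamma>1: "\<gamma> 1 = c" and c: "c \<in> fixed_set X act (topspace TG)"
  defines "Orb \<equiv> G_orbit (topspace TG) act b"
  shows "homotopic_with (equivariant (topspace TG) (subtopology X Orb) act act)
           (subtopology X Orb) X id (\<lambda>x. c)"
proof -
  have \<gamma>_cont: "continuous_map (top_of_set {0..1}) X \<gamma>"
    and \<gamma>_fixed: "\<And>t. t \<in> {0..1} \<Longrightarrow> \<gamma> t \<in> fixed_set X act (stabilizer (topspace TG) act b)"
    using \<gamma> by (auto simp: pathin_def continuous_map_in_subtopology)
  have \<gamma>_in: "\<gamma> t \<in> topspace X" if "t \<in> {0..1}" for t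
    using \<gamma>_fixed[OF that] by (simp add: fixed_set_def)
  have Orb_invariant: "G_invariant (topspace TG) act (topspace (subtopology X Orb))"
  proof -
    have "Orb \<subseteq> topspace X"
      using b act_in_topspace by (auto simp: Orb_def G_orbit_def)
    then show ?thesis
      using G_invariant_orbit[OF b] by (simp add: Orb_def Int_absorb1)
  qed
  define H where "H z = act (SOME g. g \<in> topspace TG \<and> snd z = act g b) (\<gamma> (fst z))" for z
  have H_orbit: "H (t, act g b) = act g (\<gamma> t)" if g: "g \<in> topspace TG" and t: "t \<in> {0..1}" for g t
  proof -
    define g' where "g' = (SOME g'. g' \<in> topspace TG \<and> act g b = act g' b)"
    have "g' \<in> topspace TG \<and> act g b = act g' b"
      unfolding g'_def by (rule someI_ex) (use g in blast)
    then have "act g' (\<gamma> t) = act g (\<gamma> t)"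
      using act_eq_on_stabilizer_fixed[OF _ g _ b \<gamma>_fixed[OF t]] by metis
    then show ?thesis by (simp add: H_def g'_def)
  qed
  have H_cont: "continuous_map (prod_topology (top_of_set {0..1}) (subtopology X Orb)) X H"
    unfolding Orb_def
    by (rule continuous_map_on_orbit_product[OF assms(1) _ _ assms(2) b \<gamma>_cont])
       (auto simp: compact_space_subtopology Hausdorff_space_subtopology H_orbit)
  show ?thesis
  proof (rule homotopic_with[THEN iffD2], rule equivariant_cong[OF Orb_invariant], assumption,
         intro exI conjI ballI)
    show "continuous_map (prod_topology (top_of_set {0..1}) (subtopology X Orb)) X H"
      by (fact H_cont)
    fix x assume "x \<in> topspace (subtopology X Orb)"
    then obtain g where g: "g \<in> topspace TG" and x: "x = act g b"
      by (auto simp: Orb_def G_orbit_def)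
    show "H (0, x) = id x" "H (1, x) = c"
      using c g \<gamma>0 \<gamma>1 by (auto simp: x H_orbit fixed_set_def)
  next
    fix t :: real assume t: "t \<in> {0..1}"
    show "equivariant (topspace TG) (subtopology X Orb) act act (\<lambda>x. H (t, x))"
      unfolding equivariant_def
    proof (intro ballI)
      fix h x assume h: "h \<in> topspace TG" and "x \<in> topspace (subtopology X Orb)"
      then obtain g where g: "g \<in> topspace TG" and x: "x = act g b"
        by (auto simp: Orb_def G_orbit_def)
      have "H (t, act h x) = act (mul h g) (\<gamma> t)"
        using g h b t by (simp add: x act_mul[symmetric] mul_in_group H_orbit)
      also have "\<dots> = act h (H (t, x))"
        using g h t \<gamma>_in by (simp add: x H_orbit act_mul)
      finally show "H (t, act h x) = act h (H (t, x))" .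
    qed
  qed
qed

lemma G_categorical_G_homotopic_fixed_point:
  assumes "compact_space TG" and "Hausdorff_space X" and "G_connected TG mul ginv e X act"
    and U: "G_categorical (topspace TG) X act U" and c: "c \<in> fixed_set X act (topspace TG)"
  shows "homotopic_with (equivariant (topspace TG) (subtopology X U) act act)
           (subtopology X U) X id (\<lambda>x. c)"
proof -
  obtain f b where b: "b \<in> topspace X" and f_orbit: "f ` U \<subseteq> G_orbit (topspace TG) act b"
    and hom_f: "homotopic_with (equivariant (topspace TG) (subtopology X U) act act)
                  (subtopology X U) X id f"
    using U by (auto simp: G_categorical_def G_homotopic_def)
  let ?Gb = "stabilizer (topspace TG) act b"
  have "path_connectedin X (fixed_set X act ?Gb)"
    using assms(3) closed_subgroup_stabilizer[OF assms(2) b] by (simp add: G_connected_def)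
  moreover have "b \<in> fixed_set X act ?Gb" and "c \<in> fixed_set X act ?Gb"
    using b c by (auto simp: fixed_set_def stabilizer_def)
  ultimately obtain \<gamma> where \<gamma>: "pathin (subtopology X (fixed_set X act ?Gb)) \<gamma>" "\<gamma> 0 = b" "\<gamma> 1 = c"
    by (force simp: path_connectedin_def path_connected_space_def)
  note hom_orbit = orbit_G_homotopic_fixed_point[OF assms(1,2) b \<gamma> c]
  have f_cont: "continuous_map (subtopology X U) (subtopology X (G_orbit (topspace TG) act b)) f"
    using homotopic_with_imp_continuous_maps[OF hom_f] f_orbit
    by (auto simp: continuous_map_in_subtopology)
  have f_equivariant: "equivariant (topspace TG) (subtopology X U) act act f"
    using homotopic_with_imp_property[OF hom_f] by simp
  have "homotopic_with (equivariant (topspace TG) (subtopology X U) act act)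
          (subtopology X U) X (id \<circ> f) ((\<lambda>x. c) \<circ> f)"
    by (rule homotopic_with_compose_continuous_map_right[OF hom_orbit f_cont])
       (rule equivariant_compose[OF f_equivariant continuous_map_funspace[OF f_cont]])
  then have "homotopic_with (equivariant (topspace TG) (subtopology X U) act act)
               (subtopology X U) X f (\<lambda>x. c)"
    by (simp add: o_def)
  with hom_f show ?thesis
    by (rule homotopic_with_trans)
qed

end

lemma fixed_set_G_map_image:
  assumes "G_map G E actE B actB p" and "x \<in> fixed_set E actE G"
  shows "p x \<in> fixed_set B actB G"
proof -
  have x: "x \<in> topspace E" and fixed: "\<And>g. g \<in> G \<Longrightarrow> actE g x = x"
    using assms(2) by (auto simp: fixed_set_def)
  have "p x \<in> topspace B"
    using assms(1) x by (auto simp: G_map_def continuous_map_def)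
  moreover have "actB g (p x) = p x" if "g \<in> G" for g
    using assms(1) x fixed[OF that] that by (force simp: G_map_def equivariant_def)
  ultimately show ?thesis by (simp add: fixed_set_def)
qed

lemma G_map_const_fixed:
  assumes "c \<in> fixed_set Y actY G"
  shows "G_map G X actX Y actY (\<lambda>x. c)"
  using assms by (simp add: G_map_def equivariant_def fixed_set_def)

lemma secat_G_le_cat_G:
  assumes "\<And>U. \<lbrakk>openin B U; G_categorical G B actB U\<rbrakk> \<Longrightarrow>
      \<exists>s. G_map G (subtopology B U) actB E actE s \<and> G_homotopic G (subtopology B U) actB B actB (p \<circ> s) id"
  shows "secat_G G E actE B actB p \<le> cat_G G B actB"
  unfolding secat_G_def cat_G_def
  by (rule Inf_superset_mono, clarify, intro exI conjI refl) (simp_all add: G_categorical_def assms)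

theorem proposition4p4:
  fixes TG :: "'g topology" and mul :: "'g \<Rightarrow> 'g \<Rightarrow> 'g" and ginv :: "'g \<Rightarrow> 'g" and e :: 'g
    and E :: "'e topology" and actE :: "'g \<Rightarrow> 'e \<Rightarrow> 'e"
    and B :: "'b topology" and actB :: "'g \<Rightarrow> 'b \<Rightarrow> 'b"
    and p :: "'e \<Rightarrow> 'b"
  assumes "topological_group TG mul ginv e"
    and "compact_space TG" and "Hausdorff_space TG"
    and "G_space TG mul e E actE" and "Hausdorff_space E"
    and "G_space TG mul e B actB" and "Hausdorff_space B"
    and "G_map (topspace TG) E actE B actB p"
    and "G_connected TG mul ginv e B actB"
    and "fixed_set E actE (topspace TG) \<noteq> {}"
  shows "secat_G (topspace TG) E actE B actB p \<le> cat_G (topspace TG) B actB"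
proof (rule secat_G_le_cat_G)
  interpret B: G_action TG mul ginv e B actB
    using assms(1,6) by unfold_locales
  obtain e0 where e0: "e0 \<in> fixed_set E actE (topspace TG)"
    using assms(10) by blast
  fix U assume "openin B U" and U: "G_categorical (topspace TG) B actB U"
  have "homotopic_with (equivariant (topspace TG) (subtopology B U) actB actB)
          (subtopology B U) B id (\<lambda>x. p e0)"
    using B.G_categorical_G_homotopic_fixed_point[OF assms(2,7,9) U]
      fixed_set_G_map_image[OF assms(8) e0] by blast
  then show "\<exists>s. G_map (topspace TG) (subtopology B U) actB E actE s \<and>
      G_homotopic (topspace TG) (subtopology B U) actB B actB (p \<circ> s) id"
    using G_map_const_fixed[OF e0]
    by (auto simp: G_homotopic_def homotopic_with_sym o_def)
qed

end
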